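(* Let $\mathbf q=(\mathbf r,\mathbf x)\in\mathbb Z_{\ge1}^n$ with support vector $\mathbf r=(r_1,\dots,r_d)$, $r_1<r_2<\cdots<r_d$, $d\ge 2$ (i.e. $\mathbf q$ has at least two distinct entries), and multiplicity vector $\mathbf x=(x_1,\dots,x_d)\in\mathbb Z_{\ge1}^d$. If $\Delta_{(1,\mathbf q)}$ is reflexive and has the integer decomposition property, then $$x_i\le \frac{r_{i+1}}{r_i}\qquad\text{for all } 1\le i\le d-1 .$$ Further, if there exists some $j<d$ with $r_j\nmid r_d$, then $$x_d\le \frac{r_j}{r_d \bmod r_j}.$$ Consequently, if there exists some $j<d$ with $r_j\nmid r_d$, then there are at most finitely many vectors $\mathbf q$ supported on $\mathbf r$ (i.e. finitely many multiplicity vectors $\mathbf x$) for which $\Delta_{(1,\mathbf q)}$ is reflexive and IDP.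
   Context: For $\mathbf q=(q_1,\dots,q_n)\in\mathbb Z_{\ge1}^n$ with $q_1\le\cdots\le q_n$, let $\Delta_{(1,\mathbf q)}=\mathrm{conv}\{e_1,\dots,e_n,-\sum_{i=1}^n q_ie_i\}\subset\mathbb R^n$, where $e_i$ are the standard basis vectors. A lattice polytope $P\subset\mathbb R^n$ has the integer decomposition property (IDP) if for every integer $m\ge1$, every point of $mP\cap\mathbb Z^n$ is a sum of $m$ points of $P\cap\mathbb Z^n$. A lattice polytope is reflexive if, after translation by an integer vector, the origin lies in its interior and its polar dual is also a lattice polytope; it is known that $\Delta_{(1,\mathbf q)}$ is reflexive if and only if $q_i$ divides $1+\sum_{j=1}^n q_j$ for every $i$. Given distinct positive integers $r_1,\dots,r_d$ and positive integers $x_1,\dots,x_d$, the notation $\mathbf q=(\mathbf r,\mathbf x)=(r_1^{x_1},\dots,r_d^{x_d})$ denotes the vector consisting of $x_1$ copies of $r_1$, then $x_2$ copies of $r_2$, ..., then $x_d$ copies of $r_d$; $\mathbf r$ is called the support vector and $\mathbf x$ the multiplicity vector of $\mathbf q$, and $\mathbf q$ is "supported on $\mathbf r$". *)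

theory Defs
  imports Complex_Main
begin

text \<open>Points of R^n are represented as functions nat => real vanishing outside {0..<n};
  coordinate i (1-based in the paper) is index i-1 here.\<close>

definition supp_in :: "nat \<Rightarrow> (nat \<Rightarrow> real) \<Rightarrow> bool" where
  "supp_in n x \<longleftrightarrow> (\<forall>i\<ge>n. x i = 0)"

definition lattice_pts :: "nat \<Rightarrow> (nat \<Rightarrow> real) set" where
  "lattice_pts n = {x. supp_in n x \<and> (\<forall>i. x i \<in> \<int>)}"

definition conv_list :: "(nat \<Rightarrow> real) list \<Rightarrow> (nat \<Rightarrow> real) set" where
  "conv_list V = {x. \<exists>c::nat \<Rightarrow> real. (\<forall>k<length V. c k \<ge> 0) \<and> (\<Sum>k<length V. c k) = 1 \<and>
                      x = (\<lambda>i. \<Sum>k<length V. c k * (V ! k) i)}"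

definition dilate :: "nat \<Rightarrow> (nat \<Rightarrow> real) set \<Rightarrow> (nat \<Rightarrow> real) set" where
  "dilate m P = (\<lambda>x. (\<lambda>i. real m * x i)) ` P"

definition lattice_polytope :: "nat \<Rightarrow> (nat \<Rightarrow> real) set \<Rightarrow> bool" where
  "lattice_polytope n P \<longleftrightarrow> (\<exists>V. V \<noteq> [] \<and> set V \<subseteq> lattice_pts n \<and> P = conv_list V)"

definition interior_n :: "nat \<Rightarrow> (nat \<Rightarrow> real) set \<Rightarrow> (nat \<Rightarrow> real) set" where
  "interior_n n S = {x. supp_in n x \<and> (\<exists>e>0. \<forall>y. supp_in n y \<and> (\<forall>i<n. \<bar>y i - x i\<bar> < e) \<longrightarrow> y \<in> S)}"

definition polar_n :: "nat \<Rightarrow> (nat \<Rightarrow> real) set \<Rightarrow> (nat \<Rightarrow> real) set" where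
  "polar_n n S = {y. supp_in n y \<and> (\<forall>x\<in>S. (\<Sum>i<n. y i * x i) \<le> 1)}"

definition reflexive_poly :: "nat \<Rightarrow> (nat \<Rightarrow> real) set \<Rightarrow> bool" where
  "reflexive_poly n P \<longleftrightarrow> lattice_polytope n P \<and>
     (\<exists>t\<in>lattice_pts n. (\<lambda>i. 0) \<in> interior_n n ((\<lambda>x i. x i - t i) ` P) \<and>
                        lattice_polytope n (polar_n n ((\<lambda>x i. x i - t i) ` P)))"

definition IDP :: "nat \<Rightarrow> (nat \<Rightarrow> real) set \<Rightarrow> bool" where
  "IDP n P \<longleftrightarrow> (\<forall>m::nat. m \<ge> 1 \<longrightarrow> (\<forall>p \<in> dilate m P \<inter> lattice_pts n.
      \<exists>xs. length xs = m \<and> set xs \<subseteq> P \<inter> lattice_pts n \<and> p = (\<lambda>i. \<Sum>j<m. (xs ! j) i)))"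

definition Delta :: "nat list \<Rightarrow> (nat \<Rightarrow> real) set" where
  "Delta q = conv_list (map (\<lambda>k. (\<lambda>i. if i = k then 1 else 0)) [0..<length q]
                        @ [(\<lambda>i. if i < length q then - real (q ! i) else 0)])"

text \<open>q = (r^x) : x!0 copies of r!0, then x!1 copies of r!1, ...\<close>
definition rep_vec :: "nat list \<Rightarrow> nat list \<Rightarrow> nat list" where
  "rep_vec r x = concat (map (\<lambda>k. replicate (x ! k) (r ! k)) [0..<length r])"

end

(*
  Reflexivity of Delta_(1,q) forces every entry q_k to divide Q = 1 + sum q: the translation
  vector in the definition of reflexivity must vanish, and then the polar dual of Delta_(1,q)
  has a lattice vertex with k-th coordinate 1 - Q / q_k.  Given that, the integer decomposition
  property forces sum_i (q_i mod a) < a for every entry a of q, since otherwise an explicit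
  lattice point of a dilate of Delta_(1,q) has no decomposition.  For q = (r^x) this reads
  sum_k x_k (r_k mod r_l) < r_l; the choices l = i + 1 and l = j give the two bounds, which
  together bound every multiplicity.
*)

theory Submission
  imports Defs
begin

definition coord_sum :: "nat \<Rightarrow> (nat \<Rightarrow> real) \<Rightarrow> real" where
  "coord_sum n x = (\<Sum>i<n. x i)"

definition Qsum :: "nat list \<Rightarrow> nat" where
  "Qsum q = 1 + sum_list q"

definition dot :: "nat \<Rightarrow> (nat \<Rightarrow> real) \<Rightarrow> (nat \<Rightarrow> real) \<Rightarrow> real" where
  "dot n u v = (\<Sum>i<n. u i * v i)"

definition unit_vec :: "nat \<Rightarrow> nat \<Rightarrow> real" where
  "unit_vec l = (\<lambda>i. if i = l then 1 else 0)"

lemma sum_nth_real: "(\<Sum>i<length q. real (q!i)) = real (sum_list q)"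
  by (simp add: sum_list_sum_nth lessThan_atLeast0)

lemma dot_unit_vec: "l < n \<Longrightarrow> dot n w (unit_vec l) = w l"
  by (simp add: dot_def unit_vec_def if_distrib[of "\<lambda>v. _ * v"] cong: if_cong)

lemma coord_sum_unit_vec: "l < n \<Longrightarrow> coord_sum n (unit_vec l) = 1"
  by (simp add: coord_sum_def unit_vec_def)

lemma mem_polar_iff: "y \<in> polar_n n S \<longleftrightarrow> supp_in n y \<and> (\<forall>x\<in>S. dot n y x \<le> 1)"
  by (simp add: polar_n_def dot_def)

lemma mem_translate_iff:
  fixes y t :: "nat \<Rightarrow> real"
  shows "y \<in> (\<lambda>x i. x i - t i) ` P \<longleftrightarrow> (\<lambda>i. y i + t i) \<in> P"
proof
  assume "y \<in> (\<lambda>x i. x i - t i) ` P"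
  then obtain x where "x \<in> P" "y = (\<lambda>i. x i - t i)" by auto
  moreover have "(\<lambda>i. (x i - t i) + t i) = x" by auto
  ultimately show "(\<lambda>i. y i + t i) \<in> P" by simp
next
  assume "(\<lambda>i. y i + t i) \<in> P"
  thus "y \<in> (\<lambda>x i. x i - t i) ` P" by (intro image_eqI[where x="\<lambda>i. y i + t i"]) auto
qed

lemma Ints_mult_eq_1_pos: "(a::real) \<in> \<int> \<Longrightarrow> b \<in> \<int> \<Longrightarrow> b > 0 \<Longrightarrow> a * b = 1 \<Longrightarrow> b = 1"
proof -
  assume "a \<in> \<int>" "b \<in> \<int>" "b > 0" "a * b = 1"
  then obtain x y :: int where "a = of_int x" "b = of_int y" by (auto elim!: Ints_cases)
  with \<open>b > 0\<close> \<open>a * b = 1\<close> have "y > 0" "x * y = 1"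
    by (simp, metis of_int_eq_1_iff of_int_mult)
  hence "y = 1" by (simp add: zmult_eq_1_iff)
  thus "b = 1" using \<open>b = of_int y\<close> by simp
qed

lemma Ints_gt_minus_one_imp_nonneg: "(x::real) \<in> \<int> \<Longrightarrow> x > -1 \<Longrightarrow> x \<ge> 0"
  by (elim Ints_cases) simp

lemma neg_le_div_if_mult_add_nonneg: "(a::int) > 0 \<Longrightarrow> a * z + q \<ge> 0 \<Longrightarrow> - z \<le> q div a"
proof -
  assume a: "a > 0" "a * z + q \<ge> 0"
  have "(- z * a) div a = - z" using a(1) by (metis less_irrefl nonzero_mult_div_cancel_right)
  moreover have "(- z * a) div a \<le> q div a" using a by (intro zdiv_mono1) (auto simp: algebra_simps)
  ultimately show ?thesis by simp
qed

lemma nat_mult_less_imp_le_divide: "a * c < (b::nat) \<Longrightarrow> 0 < c \<Longrightarrow> real a \<le> real b / real c"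
  by (simp add: pos_le_divide_eq flip: of_nat_mult)

subsection \<open>Barycentric and facet descriptions of the simplex\<close>

lemma mem_Delta_barycentric:
  "x \<in> Delta q \<longleftrightarrow> (\<exists>c0 c. c0 \<ge> 0 \<and> (\<forall>k<length q. c k \<ge> 0) \<and> (\<Sum>k<length q. c k) + c0 = 1 \<and>
      x = (\<lambda>i. if i < length q then c i - c0 * real (q!i) else 0))"
proof -
  define n where "n = length q"
  define V where "V = map (\<lambda>k. (\<lambda>i. if i = k then 1 else 0)) [0..<length q]
                        @ [(\<lambda>i. if i < length q then - real (q ! i) else 0)]"
  have lenV: "length V = Suc n" by (simp add: V_def n_def)
  have comb: "(\<lambda>i. \<Sum>k<length V. c k * (V ! k) i) = (\<lambda>i. if i < n then c i - c n * real (q!i) else 0)"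
    for c :: "nat \<Rightarrow> real"
  proof
    fix i
    have "(\<Sum>k<length V. c k * (V ! k) i)
        = (\<Sum>k<n. c k * (if i = k then 1 else 0)) + c n * (if i < n then - real (q ! i) else 0)"
      by (simp add: lenV V_def n_def nth_append)
    also have "(\<Sum>k<n. c k * (if i = k then 1 else 0)) = (if i < n then c i else 0)"
      by (simp add: if_distrib[of "\<lambda>v. _ * v"] cong: if_cong)
    finally show "(\<Sum>k<length V. c k * (V ! k) i) = (if i < n then c i - c n * real (q!i) else 0)"
      by simp
  qed
  have D: "Delta q = conv_list V" by (simp add: Delta_def V_def)
  show ?thesis
  proof
    assume "x \<in> Delta q"
    then obtain c where c: "\<forall>k<length V. c k \<ge> 0" "(\<Sum>k<length V. c k) = 1"
        "x = (\<lambda>i. \<Sum>k<length V. c k * (V ! k) i)" unfolding D conv_list_def by blast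
    show "\<exists>c0 c. c0 \<ge> 0 \<and> (\<forall>k<length q. c k \<ge> 0) \<and> (\<Sum>k<length q. c k) + c0 = 1 \<and>
      x = (\<lambda>i. if i < length q then c i - c0 * real (q!i) else 0)"
      using c comb[of c] by (intro exI[of _ "c n"] exI[of _ c]) (auto simp: lenV n_def)
  next
    assume "\<exists>c0 c. c0 \<ge> 0 \<and> (\<forall>k<length q. c k \<ge> 0) \<and> (\<Sum>k<length q. c k) + c0 = 1 \<and>
      x = (\<lambda>i. if i < length q then c i - c0 * real (q!i) else 0)"
    then obtain c0 c where c: "c0 \<ge> 0" "\<forall>k<n. c k \<ge> 0" "(\<Sum>k<n. c k) + c0 = 1"
       "x = (\<lambda>i. if i < n then c i - c0 * real (q!i) else 0)" by (auto simp: n_def)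
    define c' where "c' = c(n := c0)"
    have "(\<Sum>k<n. c' k) = (\<Sum>k<n. c k)" by (rule sum.cong) (auto simp: c'_def)
    moreover have "x = (\<lambda>i. if i < n then c' i - c' n * real (q!i) else 0)"
      using c(4) by (auto simp: c'_def)
    ultimately show "x \<in> Delta q" unfolding D conv_list_def
      using c comb[of c'] by (intro CollectI exI[of _ c']) (auto simp: lenV less_Suc_eq c'_def)
  qed
qed

text \<open>The facets of \<open>Delta q\<close> are \<open>coord_sum n x = 1\<close> (through the unit vectors) and,
  for each \<open>i\<close>, the hyperplane through \<open>-q\<close> and all unit vectors but the \<open>i\<close>-th.\<close>

lemma mem_Delta_iff:
  "x \<in> Delta q \<longleftrightarrow> supp_in (length q) x \<and> coord_sum (length q) x \<le> 1 \<and>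
     (\<forall>i<length q. real (Qsum q) * x i + real (q!i) * (1 - coord_sum (length q) x) \<ge> 0)"
proof -
  define n where "n = length q"
  define Q where "Q = real (Qsum q)"
  have Qpos: "Q > 0" by (simp add: Q_def Qsum_def)
  show ?thesis unfolding mem_Delta_barycentric n_def[symmetric] Q_def[symmetric]
  proof
    assume "\<exists>c0 c. c0 \<ge> 0 \<and> (\<forall>k<n. c k \<ge> 0) \<and> (\<Sum>k<n. c k) + c0 = 1 \<and>
      x = (\<lambda>i. if i < n then c i - c0 * real (q!i) else 0)"
    then obtain c0 c where c: "c0 \<ge> 0" "\<forall>k<n. c k \<ge> 0" "(\<Sum>k<n. c k) + c0 = 1"
       "x = (\<lambda>i. if i < n then c i - c0 * real (q!i) else 0)" by blast
    have "coord_sum n x = (\<Sum>i<n. c i) - c0 * (\<Sum>i<n. real (q!i))"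
      by (simp add: coord_sum_def c(4) sum_subtractf sum_distrib_left)
    also have "\<dots> = 1 - c0 * Q"
      using c(3) by (simp add: sum_nth_real n_def Q_def Qsum_def algebra_simps)
    finally have s: "coord_sum n x = 1 - c0 * Q" .
    have "Q * x i + real (q!i) * (1 - coord_sum n x) = Q * c i" if "i < n" for i
      using that unfolding s by (simp add: c(4) algebra_simps)
    thus "supp_in n x \<and> coord_sum n x \<le> 1 \<and> (\<forall>i<n. Q * x i + real (q!i) * (1 - coord_sum n x) \<ge> 0)"
      using s c(1,2) Qpos by (simp add: supp_in_def c(4))
  next
    assume a: "supp_in n x \<and> coord_sum n x \<le> 1 \<and> (\<forall>i<n. Q * x i + real (q!i) * (1 - coord_sum n x) \<ge> 0)"
    define c0 where "c0 = (1 - coord_sum n x) / Q"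
    define c where "c = (\<lambda>i. x i + c0 * real (q!i))"
    have "c k = (Q * x k + real (q!k) * (1 - coord_sum n x)) / Q" for k
      using Qpos by (simp add: c_def c0_def field_simps)
    hence "\<forall>k<n. c k \<ge> 0" using a Qpos by simp
    moreover have "(\<Sum>k<n. c k) + c0 = coord_sum n x + c0 * Q"
      by (simp add: c_def sum.distrib coord_sum_def sum_distrib_left[symmetric] sum_nth_real
          n_def Q_def Qsum_def algebra_simps)
    hence "(\<Sum>k<n. c k) + c0 = 1" using Qpos by (simp add: c0_def)
    moreover have "x = (\<lambda>i. if i < n then c i - c0 * real (q!i) else 0)"
      using a by (auto simp: c_def supp_in_def)
    moreover have "c0 \<ge> 0" using a Qpos by (simp add: c0_def)
    ultimately show "\<exists>c0 c. c0 \<ge> 0 \<and> (\<forall>k<n. c k \<ge> 0) \<and> (\<Sum>k<n. c k) + c0 = 1 \<and>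
      x = (\<lambda>i. if i < n then c i - c0 * real (q!i) else 0)" by blast
  qed
qed

lemma unit_vec_in_Delta: "l < length q \<Longrightarrow> unit_vec l \<in> Delta q"
  by (simp add: mem_Delta_iff coord_sum_unit_vec) (simp add: unit_vec_def supp_in_def)

lemma minus_q_in_Delta: "(\<lambda>i. if i < length q then - real (q ! i) else 0) \<in> Delta q"
proof -
  have "coord_sum (length q) (\<lambda>i. if i < length q then - real (q ! i) else 0) = 1 - real (Qsum q)"
    by (simp add: coord_sum_def sum_negf sum_nth_real Qsum_def)
  thus ?thesis by (simp add: mem_Delta_iff supp_in_def)
qed

subsection \<open>Reflexivity forces \<open>q\<^sub>k\<close> to divide \<open>1 + \<Sum>q\<close>\<close>

lemma mem_conv_list: "v \<in> set W \<Longrightarrow> v \<in> conv_list W"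
proof -
  assume "v \<in> set W"
  then obtain k where k: "k < length W" "W ! k = v" by (auto simp: in_set_conv_nth)
  show ?thesis unfolding conv_list_def
    using k by (intro CollectI exI[of _ "\<lambda>j. if j = k then 1 else 0"])
      (auto simp: if_distrib[of "\<lambda>v. v * _"] cong: if_cong)
qed

text \<open>Averaging over \<open>F\<close>: every vertex with positive weight in the convex combination \<open>u\<close>
  must attain the bound \<open>1\<close> on all of \<open>F\<close>.\<close>

lemma polar_vertex_attains:
  assumes P: "polar_n n S = conv_list W" and u: "u \<in> polar_n n S"
    and F: "finite F" "F \<subseteq> S" and uF: "\<forall>f\<in>F. dot n u f = 1"
  obtains w where "w \<in> set W" "\<forall>f\<in>F. dot n w f = 1"
proof -
  obtain c where c: "\<forall>k<length W. c k \<ge> 0" "(\<Sum>k<length W. c k) = 1"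
      "u = (\<lambda>i. \<Sum>k<length W. c k * (W ! k) i)" using u unfolding P conv_list_def by blast
  define m where "m = length W"
  define \<phi> where "\<phi> v = (\<Sum>f\<in>F. dot n v f)" for v
  have le1: "dot n (W!k) f \<le> 1" if "k < m" "f \<in> F" for k f
    using mem_conv_list[of "W!k" W] that F(2) by (auto simp: P[symmetric] mem_polar_iff m_def)
  have phi_le: "\<phi> (W!k) \<le> real (card F)" if "k < m" for k
    using sum_mono[of F "\<lambda>f. dot n (W!k) f" "\<lambda>_. 1"] le1[OF that] by (simp add: \<phi>_def)
  have dot_u: "dot n u f = (\<Sum>k<m. c k * dot n (W!k) f)" for f
    by (simp add: c(3) dot_def m_def sum_distrib_right sum_distrib_left mult.assoc) (rule sum.swap)
  have "\<phi> u = (\<Sum>k<m. c k * \<phi> (W!k))"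
    by (simp add: \<phi>_def dot_u sum_distrib_left) (rule sum.swap)
  moreover have "\<phi> u = real (card F)" using uF by (simp add: \<phi>_def)
  ultimately have "(\<Sum>k<m. c k * (real (card F) - \<phi> (W!k))) = 0"
    using c(2) by (simp add: right_diff_distrib sum_subtractf sum_distrib_right[symmetric] m_def)
  moreover have "\<forall>k\<in>{..<m}. c k * (real (card F) - \<phi> (W!k)) \<ge> 0"
    using c(1) phi_le by (auto simp: m_def)
  ultimately have z: "\<forall>k<m. c k * (real (card F) - \<phi> (W!k)) = 0"
    using sum_nonneg_eq_0_iff[of "{..<m}" "\<lambda>k. c k * (real (card F) - \<phi> (W!k))"] by simp
  obtain k where k: "k < m" "c k \<noteq> 0"
  proof (rule ccontr)
    assume "\<not> thesis"
    hence "\<forall>k<m. c k = 0" using that by blast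
    thus False using c(2) by (simp add: m_def)
  qed
  have "\<phi> (W!k) = real (card F)" using z k by auto
  hence "(\<Sum>f\<in>F. 1 - dot n (W!k) f) = 0" by (simp add: \<phi>_def sum_subtractf)
  hence "\<forall>f\<in>F. dot n (W!k) f = 1"
    using sum_nonneg_eq_0_iff[OF F(1), of "\<lambda>f. 1 - dot n (W!k) f"] le1[OF k(1)] by auto
  moreover have "W!k \<in> set W" using k by (simp add: m_def)
  ultimately show ?thesis using that by blast
qed

lemma interior_n_subset: "interior_n n S \<subseteq> S"
  by (force simp: interior_n_def)

lemma interior_translate_Delta_sum_less:
  assumes int: "(\<lambda>i. 0) \<in> interior_n (length q) ((\<lambda>x i. x i - t i) ` Delta q)"
    and n: "length q \<ge> 1"
  shows "coord_sum (length q) t < 1"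
proof -
  define n where "n = length q"
  obtain e where e: "e > 0"
    and ball: "\<And>y. supp_in n y \<Longrightarrow> (\<forall>i<n. \<bar>y i\<bar> < e) \<Longrightarrow> y \<in> (\<lambda>x i. x i - t i) ` Delta q"
    using int unfolding interior_n_def n_def by auto
  have "(\<lambda>i. if i < n then e/2 else 0) \<in> (\<lambda>x i. x i - t i) ` Delta q"
    using e by (intro ball) (auto simp: supp_in_def)
  hence "coord_sum n (\<lambda>i. (if i < n then e/2 else 0) + t i) \<le> 1"
    by (simp add: mem_translate_iff mem_Delta_iff n_def)
  moreover have "coord_sum n (\<lambda>i. (if i < n then e/2 else 0) + t i) = real n * (e/2) + coord_sum n t"
    by (simp add: coord_sum_def sum.distrib)
  moreover have "real n * (e/2) > 0" using n e unfolding n_def by (intro mult_pos_pos) auto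
  ultimately show ?thesis unfolding n_def by linarith
qed

text \<open>The vertex of the polar dual of \<open>Delta q - t\<close> lying on the facet opposite to \<open>-q\<close> is
  \<open>(1/(1 - \<Sum>t)) (1,\<dots>,1)\<close>; its integrality forces \<open>\<Sum>t = 0\<close>.\<close>

lemma polar_translate_Delta_vertex:
  assumes n: "length q \<ge> 1" and S1: "coord_sum (length q) t < 1"
    and W: "polar_n (length q) ((\<lambda>x i. x i - t i) ` Delta q) = conv_list W"
  obtains w where "w \<in> set W" "w 0 * (1 - coord_sum (length q) t) = 1"
proof -
  define n where "n = length q"
  define S where "S = coord_sum n t"
  define Img where "Img = (\<lambda>x i. x i - t i) ` Delta q"
  have S1': "S < 1" using S1 by (simp add: S_def n_def)
  define u where "u = (\<lambda>i. if i < n then 1 / (1 - S) else 0)"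
  define F where "F = (\<lambda>l. (\<lambda>i. unit_vec l i - t i)) ` {..<n}"
  have dot_u: "dot n u z = (coord_sum n (\<lambda>i. z i + t i) - S) / (1 - S)" for z
    by (simp add: dot_def u_def coord_sum_def S_def sum_divide_distrib[symmetric] sum.distrib)
  have "u \<in> polar_n n Img"
    unfolding mem_polar_iff
  proof (intro conjI ballI)
    show "supp_in n u" by (simp add: supp_in_def u_def)
    fix z assume "z \<in> Img"
    hence "coord_sum n (\<lambda>i. z i + t i) \<le> 1" by (simp add: Img_def mem_translate_iff mem_Delta_iff n_def)
    thus "dot n u z \<le> 1" using S1' by (simp add: dot_u)
  qed
  moreover have "finite F" by (simp add: F_def)
  moreover have "F \<subseteq> Img"
    using unit_vec_in_Delta[of _ q] by (auto simp: F_def Img_def mem_translate_iff n_def)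
  moreover have "\<forall>f\<in>F. dot n u f = 1"
    using S1' by (auto simp: F_def dot_u coord_sum_unit_vec)
  ultimately obtain w where w: "w \<in> set W" "\<forall>f\<in>F. dot n w f = 1"
    using polar_vertex_attains[OF W[folded Img_def n_def]] by blast
  define a where "a = dot n w t"
  have wl: "w l = 1 + a" if l: "l < n" for l
  proof -
    have "dot n w (\<lambda>i. unit_vec l i - t i) = 1" using w(2) l by (auto simp: F_def)
    moreover have "dot n w (\<lambda>i. unit_vec l i - t i) = w l - a"
      using dot_unit_vec[OF l, of w] by (simp add: dot_def a_def right_diff_distrib sum_subtractf)
    ultimately show ?thesis by simp
  qed
  have "a = dot n w t" by (simp add: a_def)
  also have "\<dots> = (\<Sum>i<n. (1 + a) * t i)" unfolding dot_def by (rule sum.cong) (simp_all add: wl)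
  also have "\<dots> = (1 + a) * S" by (simp add: S_def coord_sum_def sum_distrib_left)
  finally have "(1 + a) * (1 - S) = 1" by (simp add: algebra_simps)
  moreover have "w 0 = 1 + a" using wl[of 0] n by (cases q) (auto simp: n_def)
  ultimately show ?thesis using that w(1) by (simp add: S_def n_def)
qed

lemma lattice_polar_translate_Delta_sum_eq_0:
  assumes n: "length q \<ge> 1" and t: "t \<in> lattice_pts (length q)"
    and S1: "coord_sum (length q) t < 1"
    and W: "set W \<subseteq> lattice_pts (length q)"
      "polar_n (length q) ((\<lambda>x i. x i - t i) ` Delta q) = conv_list W"
  shows "coord_sum (length q) t = 0"
proof -
  obtain w where w: "w \<in> set W" "w 0 * (1 - coord_sum (length q) t) = 1"
    using polar_translate_Delta_vertex[OF n S1 W(2)] by blast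
  have "w 0 \<in> \<int>" using w(1) W(1) by (auto simp: lattice_pts_def)
  moreover have "coord_sum (length q) t \<in> \<int>"
    using t unfolding coord_sum_def lattice_pts_def by (intro Ints_sum) auto
  ultimately have "1 - coord_sum (length q) t = 1"
    using Ints_mult_eq_1_pos[OF _ _ _ w(2)] S1 by auto
  thus ?thesis by simp
qed

lemma Delta_lattice_point_sum_eq_0:
  assumes t: "t \<in> Delta q" "t \<in> lattice_pts (length q)" and S0: "coord_sum (length q) t = 0"
  shows "t = (\<lambda>i. 0)"
proof -
  define n where "n = length q"
  have Qpos: "real (Qsum q) > 0" by (simp add: Qsum_def)
  have tnn: "t i \<ge> 0" if i: "i < n" for i
  proof -
    have "0 \<le> real (Qsum q) * t i + real (q!i)" using t(1) S0 i by (simp add: mem_Delta_iff n_def)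
    moreover have "real (q!i) < real (Qsum q)"
      using elem_le_sum_list[of i q] i by (simp add: Qsum_def n_def)
    ultimately have "real (Qsum q) * t i > real (Qsum q) * (-1)" by linarith
    hence "t i > -1" using Qpos mult_less_cancel_left_pos by blast
    thus ?thesis using t(2) Ints_gt_minus_one_imp_nonneg by (auto simp: lattice_pts_def)
  qed
  have "\<forall>i\<in>{..<n}. t i = 0"
    using S0 sum_nonneg_eq_0_iff[of "{..<n}" t] tnn by (auto simp: coord_sum_def n_def)
  moreover have "t i = 0" if "i \<ge> n" for i
    using t(2) that by (simp add: lattice_pts_def supp_in_def n_def)
  ultimately show ?thesis by (metis lessThan_iff not_le)
qed

lemma reflexive_Delta_polar_lattice:
  assumes R: "reflexive_poly (length q) (Delta q)" and n: "length q \<ge> 1"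
  obtains W where "set W \<subseteq> lattice_pts (length q)" "polar_n (length q) (Delta q) = conv_list W"
proof -
  obtain t W where t: "t \<in> lattice_pts (length q)"
    and int: "(\<lambda>i. 0) \<in> interior_n (length q) ((\<lambda>x i. x i - t i) ` Delta q)"
    and W: "set W \<subseteq> lattice_pts (length q)"
      "polar_n (length q) ((\<lambda>x i. x i - t i) ` Delta q) = conv_list W"
    using R unfolding reflexive_poly_def lattice_polytope_def by blast
  have "coord_sum (length q) t = 0"
    using lattice_polar_translate_Delta_sum_eq_0[OF n t _ W]
      interior_translate_Delta_sum_less[OF int n] by blast
  moreover have "(\<lambda>i. 0) \<in> (\<lambda>x i. x i - t i) ` Delta q" using interior_n_subset int by blast
  hence "t \<in> Delta q" using mem_translate_iff[of "\<lambda>i. 0" t] by simp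
  ultimately have "t = (\<lambda>i. 0)" using Delta_lattice_point_sum_eq_0 t by blast
  thus ?thesis using that W by simp
qed

text \<open>The polar vertex on the facet through \<open>-q\<close> and all \<open>e\<^sub>l\<close>, \<open>l \<noteq> k\<close>, has \<open>k\<close>-th
  coordinate \<open>1 - Qsum q / q\<^sub>k\<close>.\<close>

lemma polar_Delta_vertex_coord:
  assumes k: "k < length q" and qk: "q ! k \<ge> 1" and W: "polar_n (length q) (Delta q) = conv_list W"
  obtains w where "w \<in> set W" "real (Qsum q) = real (q!k) * (1 - w k)"
proof -
  define n where "n = length q"
  define Q where "Q = real (Qsum q)"
  define qk where "qk = real (q!k)"
  have qkpos: "qk > 0" using qk by (simp add: qk_def)
  define u where "u = (\<lambda>i. if i < n then (if i = k then 1 - Q / qk else 1) else 0)"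
  define vq where "vq = (\<lambda>i. if i < n then - real (q ! i) else 0)"
  define F where "F = insert vq (unit_vec ` ({..<n} - {k}))"
  have dot_u: "dot n u z = coord_sum n z - (Q / qk) * z k" for z
  proof -
    have "dot n u z = (\<Sum>i<n. z i - (if i = k then (Q / qk) * z k else 0))"
      unfolding dot_def by (rule sum.cong) (auto simp: u_def algebra_simps)
    also have "\<dots> = coord_sum n z - (Q / qk) * z k" using k by (simp add: sum_subtractf coord_sum_def n_def)
    finally show ?thesis .
  qed
  have "u \<in> polar_n n (Delta q)"
    unfolding mem_polar_iff
  proof (intro conjI ballI)
    show "supp_in n u" by (simp add: supp_in_def u_def)
    fix z assume "z \<in> Delta q"
    hence "Q * z k + qk * (1 - coord_sum n z) \<ge> 0" using k by (simp add: mem_Delta_iff n_def Q_def qk_def)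
    hence "(Q / qk) * z k + (1 - coord_sum n z) \<ge> 0"
      using qkpos by (simp add: field_simps zero_le_divide_iff)
    thus "dot n u z \<le> 1" by (simp add: dot_u)
  qed
  moreover have "finite F" by (simp add: F_def)
  moreover have "F \<subseteq> Delta q"
    using unit_vec_in_Delta[of _ q] minus_q_in_Delta[of q] by (auto simp: F_def vq_def n_def)
  moreover have "\<forall>f\<in>F. dot n u f = 1"
  proof -
    have "coord_sum n vq = 1 - Q"
      by (simp add: vq_def coord_sum_def sum_negf sum_nth_real n_def Q_def Qsum_def)
    moreover have "vq k = - qk" using k by (simp add: vq_def qk_def n_def)
    ultimately have "dot n u vq = 1" using qkpos by (simp add: dot_u)
    moreover have "dot n u (unit_vec l) = 1" if "l < n" "l \<noteq> k" for l
      using that by (simp add: dot_unit_vec u_def)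
    ultimately show ?thesis by (auto simp: F_def)
  qed
  ultimately obtain w where w: "w \<in> set W" "\<forall>f\<in>F. dot n w f = 1"
    using polar_vertex_attains[OF W[folded n_def]] by blast
  have w1: "w l = 1" if "l < n" "l \<noteq> k" for l
    using w(2) dot_unit_vec[OF \<open>l < n\<close>, of w] that by (auto simp: F_def)
  have "dot n w vq = 1" using w(2) by (simp add: F_def)
  moreover have "dot n w vq = - (\<Sum>i<n. real (q!i) + (if i = k then qk * (w k - 1) else 0))"
    unfolding dot_def vq_def
    by (simp add: sum_negf[symmetric]) (rule sum.cong, auto simp: w1 qk_def algebra_simps)
  moreover have "(\<Sum>i<n. real (q!i) + (if i = k then qk * (w k - 1) else 0)) = (Q - 1) + qk * (w k - 1)"
    using k by (simp add: sum.distrib sum_nth_real n_def Q_def Qsum_def)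
  ultimately have "Q = qk * (1 - w k)" by (simp add: algebra_simps)
  thus ?thesis using that w(1) by (simp add: Q_def qk_def)
qed

lemma reflexive_Delta_dvd:
  assumes R: "reflexive_poly (length q) (Delta q)" and k: "k < length q" and qk: "q ! k \<ge> 1"
  shows "q ! k dvd Qsum q"
proof -
  obtain W where W: "set W \<subseteq> lattice_pts (length q)" "polar_n (length q) (Delta q) = conv_list W"
    by (rule reflexive_Delta_polar_lattice[OF R]) (use k in simp)
  obtain w where w: "w \<in> set W" "real (Qsum q) = real (q!k) * (1 - w k)"
    using polar_Delta_vertex_coord[OF k qk W(2)] by blast
  obtain z where z: "w k = of_int z" using w(1) W(1) by (auto simp: lattice_pts_def elim!: Ints_cases)
  have "real_of_int (int (Qsum q)) = real_of_int (int (q!k) * (1 - z))"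
    using w(2) z by simp
  hence "int (Qsum q) = int (q!k) * (1 - z)" by (simp only: of_int_eq_iff)
  hence "int (q!k) dvd int (Qsum q)" by (metis dvdI)
  thus ?thesis by simp
qed

subsection \<open>The integer decomposition property bounds the residues modulo a divisor\<close>

text \<open>Throughout, \<open>a = q\<^sub>k\<close> divides \<open>Qsum q = a B\<close>, and \<open>D = \<Sum>i. q\<^sub>i div a\<close>. The lattice point
  \<open>p = -(q\<^sub>i div a)\<^sub>i\<close> lies in \<open>(B - D) \<cdot> Delta q\<close>, but when \<open>\<Sum>i. q\<^sub>i mod a \<ge> a\<close> it is not a
  sum of \<open>B - D\<close> lattice points of \<open>Delta q\<close>.\<close>

lemma IDP_D:
  assumes "IDP n P" "m \<ge> 1" "p \<in> dilate m P" "p \<in> lattice_pts n"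
  obtains xs where "length xs = m" "set xs \<subseteq> P \<inter> lattice_pts n" "p = (\<lambda>i. \<Sum>j<m. (xs ! j) i)"
proof -
  have "\<forall>p \<in> dilate m P \<inter> lattice_pts n. \<exists>xs. length xs = m \<and> set xs \<subseteq> P \<inter> lattice_pts n
      \<and> p = (\<lambda>i. \<Sum>j<m. (xs ! j) i)"
    using assms(1,2) unfolding IDP_def by blast
  thus ?thesis using assms(3,4) that by blast
qed

lemma floor_point_in_dilate_Delta:
  assumes a: "a \<ge> 1" and QB: "Qsum q = a * B" and D: "D = (\<Sum>i<length q. q!i div a)" and DB: "D < B"
  shows "(\<lambda>i. if i < length q then - real (q!i div a) else 0) \<in> dilate (B - D) (Delta q)"
proof -
  define n where "n = length q"
  define m where "m = B - D"
  define p where "p = (\<lambda>i. if i < n then - real (q!i div a) else 0)"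
  define x where "x = (\<lambda>i. p i / real m)"
  have mpos: "real m > 0" and mBD: "real m = real B - real D" using DB by (simp_all add: m_def)
  have qdm: "real (q!i) = real a * real (q!i div a) + real (q!i mod a)" for i
    by (metis div_mult_mod_eq mult.commute of_nat_add of_nat_mult)
  have "coord_sum n x = - real D / real m"
    by (simp add: coord_sum_def x_def p_def D n_def sum_divide_distrib[symmetric] sum_negf)
  hence slack: "1 - coord_sum n x = real B / real m" using mpos by (simp add: mBD field_simps)
  have "x \<in> Delta q" unfolding mem_Delta_iff n_def[symmetric]
  proof (intro conjI allI impI)
    show "supp_in n x" by (simp add: supp_in_def x_def p_def)
    show "coord_sum n x \<le> 1" using slack divide_nonneg_nonneg[of "real B" "real m"] by linarith
    fix i assume i: "i < n"
    have "real (Qsum q) * x i + real (q!i) * (1 - coord_sum n x) = real B * real (q!i mod a) / real m"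
      using i mpos unfolding slack QB by (simp add: x_def p_def qdm[of i] field_simps)
    thus "real (Qsum q) * x i + real (q!i) * (1 - coord_sum n x) \<ge> 0" by simp
  qed
  moreover have "p = (\<lambda>i. real m * x i)" using mpos by (simp add: x_def)
  ultimately show ?thesis unfolding dilate_def p_def m_def n_def by blast
qed

lemma Delta_lattice_point_coord_bounds:
  assumes x: "x \<in> Delta q" "x \<in> lattice_pts (length q)"
    and k0: "k0 < length q" "q ! k0 = a" and a: "a \<ge> 1" and QB: "Qsum q = a * B"
  shows "1 - coord_sum (length q) x < real B \<Longrightarrow> x k0 \<ge> 0"
    and "1 - coord_sum (length q) x = real B \<Longrightarrow> i < length q \<Longrightarrow> x i \<ge> - real (q!i div a)"
proof -
  define \<beta> where "\<beta> = 1 - coord_sum (length q) x"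
  have Bpos: "real B > 0" using QB by (cases B) (simp_all add: Qsum_def)
  have facet: "real a * (real B * x i) + real (q!i) * \<beta> \<ge> 0" if "i < length q" for i
    using x(1) that by (simp add: mem_Delta_iff \<beta>_def QB mult.assoc)
  have int: "x i \<in> \<int>" for i using x(2) by (simp add: lattice_pts_def)
  show "x k0 \<ge> 0" if "\<beta> < real B"
  proof -
    have "real a * (real B * x k0 + \<beta>) \<ge> 0" using facet[OF k0(1)] k0(2) by (simp add: algebra_simps)
    hence "real B * x k0 + \<beta> \<ge> 0" using a by (simp add: zero_le_mult_iff)
    hence "real B * x k0 > real B * (-1)" using that by linarith
    hence "x k0 > -1" using Bpos mult_less_cancel_left_pos by blast
    thus ?thesis using int Ints_gt_minus_one_imp_nonneg by blast
  qed
  show "x i \<ge> - real (q!i div a)" if "\<beta> = real B" "i < length q"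
  proof -
    obtain z where z: "x i = of_int z" using int by (meson Ints_cases)
    have "real B * (real a * x i + real (q!i)) \<ge> 0"
      using facet[OF that(2)] that(1) by (simp add: algebra_simps)
    hence "real a * x i + real (q!i) \<ge> 0" using Bpos by (simp add: zero_le_mult_iff)
    hence "real_of_int (int a * z + int (q!i)) \<ge> 0" using z by simp
    hence "int a * z + int (q!i) \<ge> 0" by linarith
    hence "- z \<le> int (q!i) div int a" using a by (intro neg_le_div_if_mult_add_nonneg) auto
    hence "- z \<le> int (q!i div a)" by (simp add: zdiv_int)
    thus ?thesis using z by linarith
  qed
qed

text \<open>In a decomposition the slacks \<open>1 - coord_sum\<close> of the summands add up to \<open>B\<close>; since the
  \<open>k\<^sub>0\<close>-th coordinate of \<open>p\<close> is \<open>-1\<close>, some summand has the full slack \<open>B\<close>, and such a summand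
  dominates \<open>p\<close> coordinatewise.\<close>

lemma floor_point_decomposition_bound:
  assumes k0: "k0 < length q" "q ! k0 = a" and a: "a \<ge> 1" and QB: "Qsum q = a * B"
    and D: "D = (\<Sum>i<length q. q!i div a)" and DB: "D < B"
    and xs: "length xs = B - D" "set xs \<subseteq> Delta q \<inter> lattice_pts (length q)"
      "(\<lambda>i. if i < length q then - real (q!i div a) else 0) = (\<lambda>i. \<Sum>j<B - D. (xs ! j) i)"
  shows "B \<le> D + 1"
proof -
  define n where "n = length q"
  define m where "m = B - D"
  define p where "p = (\<lambda>i. if i < n then - real (q!i div a) else 0)"
  define \<beta> where "\<beta> j = 1 - coord_sum n (xs ! j)" for j
  have p_sum: "p = (\<lambda>i. \<Sum>j<m. (xs ! j) i)" using xs(3) by (simp add: p_def m_def n_def)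
  have sum_p: "coord_sum n p = - real D" by (simp add: coord_sum_def p_def D n_def sum_negf)
  have xsD: "xs ! j \<in> Delta q" and xsL: "xs ! j \<in> lattice_pts n" if "j < m" for j
    using xs(1,2) that nth_mem[of j xs] by (auto simp: m_def n_def)
  have nonneg_k0: "(xs ! j) k0 \<ge> 0" if "j < m" "\<beta> j < real B" for j
    using Delta_lattice_point_coord_bounds(1)[OF xsD[OF that(1)] xsL[OF that(1), unfolded n_def] k0 a QB]
      that(2) by (simp add: \<beta>_def n_def)
  have above_p: "(xs ! j) i \<ge> p i" if "j < m" "\<beta> j = real B" "i < n" for i j
    using Delta_lattice_point_coord_bounds(2)[OF xsD[OF that(1)] xsL[OF that(1), unfolded n_def] k0 a QB]
      that(2,3) by (simp add: \<beta>_def p_def n_def)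
  have "(\<Sum>j<m. \<beta> j) = real m - (\<Sum>j<m. \<Sum>i<n. (xs ! j) i)"
    by (simp add: \<beta>_def sum_subtractf coord_sum_def)
  also have "(\<Sum>j<m. \<Sum>i<n. (xs ! j) i) = coord_sum n p"
    unfolding p_sum coord_sum_def by (rule sum.swap)
  finally have sum_\<beta>: "(\<Sum>j<m. \<beta> j) = real B" using DB by (simp add: sum_p m_def)
  obtain j0 where j0: "j0 < m" "\<beta> j0 \<ge> real B"
  proof (rule ccontr)
    assume "\<not> thesis"
    hence "\<forall>j<m. \<beta> j < real B" using that by force
    hence "(\<Sum>j<m. (xs ! j) k0) \<ge> 0" using nonneg_k0 by (intro sum_nonneg) auto
    moreover have "(\<Sum>j<m. (xs ! j) k0) = p k0" using p_sum by simp
    ultimately show False using k0 a by (simp add: p_def n_def)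
  qed
  have "\<beta> j0 \<le> (\<Sum>j<m. \<beta> j)"
    using j0(1) xsD by (intro member_le_sum) (auto simp: \<beta>_def mem_Delta_iff n_def)
  hence "\<beta> j0 = real B" using j0 sum_\<beta> by simp
  hence "coord_sum n p \<le> coord_sum n (xs ! j0)"
    unfolding coord_sum_def using above_p[OF j0(1)] by (intro sum_mono) simp
  moreover have "coord_sum n (xs ! j0) = 1 - real B" using \<open>\<beta> j0 = real B\<close> by (simp add: \<beta>_def)
  ultimately show ?thesis using sum_p by simp
qed

lemma IDP_Delta_mod_sum_less:
  assumes I: "IDP (length q) (Delta q)" and k0: "k0 < length q" "q ! k0 = a" and a: "a \<ge> 1"
    and dvd: "a dvd Qsum q"
  shows "(\<Sum>i<length q. q ! i mod a) < a"
proof (rule ccontr)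
  assume large: "\<not> (\<Sum>i<length q. q ! i mod a) < a"
  define B where "B = Qsum q div a"
  define D where "D = (\<Sum>i<length q. q ! i div a)"
  have QB: "Qsum q = a * B" using dvd by (simp add: B_def)
  have "sum_list q = (\<Sum>i<length q. q ! i)" by (simp add: sum_list_sum_nth lessThan_atLeast0)
  also have "\<dots> = (\<Sum>i<length q. a * (q ! i div a) + q ! i mod a)" by (simp add: mult_div_mod_eq)
  also have "\<dots> = a * D + (\<Sum>i<length q. q ! i mod a)"
    by (simp only: sum.distrib sum_distrib_left D_def)
  finally have "a * B = 1 + a * D + (\<Sum>i<length q. q ! i mod a)" using QB by (simp add: Qsum_def)
  hence "a * (D + 1) < a * B" using large by (simp add: distrib_left)
  hence "D + 1 < B" by (simp only: mult_less_cancel1)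
  hence BD: "B \<ge> D + 2" by simp
  have p_dil: "(\<lambda>i. if i < length q then - real (q!i div a) else 0) \<in> dilate (B - D) (Delta q)"
    using floor_point_in_dilate_Delta[OF a QB D_def] BD by simp
  have p_lat: "(\<lambda>i. if i < length q then - real (q!i div a) else 0) \<in> lattice_pts (length q)"
    by (auto simp: lattice_pts_def supp_in_def)
  have "B - D \<ge> 1" using BD by simp
  then obtain xs where xs: "length xs = B - D" "set xs \<subseteq> Delta q \<inter> lattice_pts (length q)"
      "(\<lambda>i. if i < length q then - real (q!i div a) else 0) = (\<lambda>i. \<Sum>j<B - D. (xs ! j) i)"
    using IDP_D[OF I _ p_dil p_lat] by blast
  have "B \<le> D + 1" using floor_point_decomposition_bound[OF k0 a QB D_def _ xs] BD by simp
  thus False using BD by simp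
qed

subsection \<open>Multiplicity vectors\<close>

definition reflexive_IDP_multiplicity :: "nat list \<Rightarrow> nat list \<Rightarrow> bool" where
  "reflexive_IDP_multiplicity r x \<longleftrightarrow> length x = length r \<and> (\<forall>k<length x. x ! k \<ge> 1)
     \<and> reflexive_poly (length (rep_vec r x)) (Delta (rep_vec r x))
     \<and> IDP (length (rep_vec r x)) (Delta (rep_vec r x))"

lemma sum_rep_vec:
  "(\<Sum>i<length (rep_vec r x). f (rep_vec r x ! i)) = (\<Sum>k<length r. x!k * f (r!k))"
proof -
  have sum_list_concat: "sum_list (concat xss) = sum_list (map sum_list xss)" for xss :: "nat list list"
    by (induct xss) auto
  have "(\<Sum>i<length (rep_vec r x). f (rep_vec r x ! i)) = sum_list (map f (rep_vec r x))"
    by (simp add: sum_list_sum_nth lessThan_atLeast0)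
  also have "\<dots> = sum_list (map (\<lambda>k. x!k * f (r!k)) [0..<length r])"
    by (simp add: rep_vec_def map_concat sum_list_concat comp_def sum_list_replicate)
  also have "\<dots> = (\<Sum>k<length r. x!k * f (r!k))"
    by (simp add: sum_list_sum_nth lessThan_atLeast0)
  finally show ?thesis .
qed

lemma mem_rep_vec: "k < length r \<Longrightarrow> x ! k \<ge> 1 \<Longrightarrow> r ! k \<in> set (rep_vec r x)"
  unfolding rep_vec_def by force

lemma reflexive_IDP_multiplicity_mod_sum_less:
  assumes x: "reflexive_IDP_multiplicity r x" and r_pos: "\<forall>k<length r. r!k \<ge> 1" and l: "l < length r"
  shows "(\<Sum>k<length r. x!k * (r!k mod r!l)) < r!l"
proof -
  define q where "q = rep_vec r x"
  have "r ! l \<in> set q" using mem_rep_vec[OF l] x l by (simp add: q_def reflexive_IDP_multiplicity_def)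
  then obtain k0 where k0: "k0 < length q" "q ! k0 = r ! l" by (auto simp: in_set_conv_nth)
  have "q ! k0 dvd Qsum q"
    using reflexive_Delta_dvd[of q k0] x k0 r_pos l by (simp add: q_def reflexive_IDP_multiplicity_def)
  hence "(\<Sum>i<length q. q ! i mod r!l) < r!l"
    using IDP_Delta_mod_sum_less[of q k0 "r!l"] x k0 r_pos l
    by (simp add: q_def reflexive_IDP_multiplicity_def)
  thus ?thesis using sum_rep_vec[of "\<lambda>v. v mod r!l" r x] by (simp add: q_def)
qed

lemma reflexive_IDP_multiplicity_bound_succ:
  assumes x: "reflexive_IDP_multiplicity r x" and r_pos: "\<forall>k<length r. r!k \<ge> 1"
    and r_sorted: "sorted_wrt (<) r" and i: "i + 1 < length r"
  shows "x ! i * r ! i < r ! (i + 1)"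
proof -
  have "r ! i < r ! (i + 1)" using r_sorted i by (simp add: sorted_wrt_iff_nth_less)
  hence "x ! i * r ! i = x ! i * (r ! i mod r ! (i + 1))" by simp
  also have "\<dots> \<le> (\<Sum>k<length r. x!k * (r!k mod r!(i + 1)))" using i by (intro member_le_sum) auto
  also have "\<dots> < r ! (i + 1)" using reflexive_IDP_multiplicity_mod_sum_less[OF x r_pos i] .
  finally show ?thesis .
qed

lemma reflexive_IDP_multiplicity_bound_last:
  assumes x: "reflexive_IDP_multiplicity r x" and r_pos: "\<forall>k<length r. r!k \<ge> 1" and j: "j < length r"
  shows "x ! (length r - 1) * (r ! (length r - 1) mod r ! j) < r ! j"
proof -
  have "x ! (length r - 1) * (r ! (length r - 1) mod r ! j) \<le> (\<Sum>k<length r. x!k * (r!k mod r!j))"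
    using j by (intro member_le_sum) auto
  also have "\<dots> < r ! j" using reflexive_IDP_multiplicity_mod_sum_less[OF x r_pos j] .
  finally show ?thesis .
qed

lemma finite_reflexive_IDP_multiplicities:
  assumes r_pos: "\<forall>k<length r. r!k \<ge> 1" and r_sorted: "sorted_wrt (<) r"
    and j: "j < length r" "\<not> r ! j dvd r ! (length r - 1)"
  shows "finite {x. reflexive_IDP_multiplicity r x}"
proof (rule finite_subset)
  define M where "M = sum_list r"
  have r_le: "r ! k \<le> M" if "k < length r" for k using that by (simp add: M_def elem_le_sum_list)
  have "x ! k < M" if x: "reflexive_IDP_multiplicity r x" and k: "k < length r" for x k
  proof (cases "k + 1 < length r")
    case True
    have "x ! k \<le> x ! k * r ! k" using r_pos k by simp
    also have "\<dots> < r ! (k + 1)" using reflexive_IDP_multiplicity_bound_succ[OF x r_pos r_sorted True] .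
    finally show ?thesis using r_le[OF True] by simp
  next
    case False
    hence "k = length r - 1" using k by simp
    have "r ! (length r - 1) mod r ! j > 0" using j(2) by (simp add: mod_greater_zero_iff_not_dvd)
    hence "x ! k \<le> x ! k * (r ! (length r - 1) mod r ! j)" by simp
    also have "\<dots> < r ! j"
      using reflexive_IDP_multiplicity_bound_last[OF x r_pos j(1)] \<open>k = length r - 1\<close> by simp
    finally show ?thesis using r_le[OF j(1)] by simp
  qed
  thus "{x. reflexive_IDP_multiplicity r x} \<subseteq> {xs. set xs \<subseteq> {0..M} \<and> length xs = length r}"
    by (fastforce simp: reflexive_IDP_multiplicity_def in_set_conv_nth)
  show "finite {xs. set xs \<subseteq> {0..M} \<and> length xs = length r}"
    by (rule finite_lists_length_eq) simp
qed

theorem theorem3p3: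
  fixes r :: "nat list"
  assumes r_pos: "\<forall>k<length r. r ! k \<ge> 1"
      and r_sorted: "sorted_wrt (<) r"
      and d_ge2: "length r \<ge> 2"
  shows "(\<forall>x::nat list. length x = length r \<and> (\<forall>k<length x. x ! k \<ge> 1)
            \<and> reflexive_poly (length (rep_vec r x)) (Delta (rep_vec r x))
            \<and> IDP (length (rep_vec r x)) (Delta (rep_vec r x))
          \<longrightarrow> (\<forall>i. i + 1 < length r \<longrightarrow> real (x ! i) \<le> real (r ! (i + 1)) / real (r ! i))
            \<and> (\<forall>j. j + 1 < length r \<and> \<not> (r ! j) dvd (r ! (length r - 1)) \<longrightarrow>
                   real (x ! (length r - 1)) \<le> real (r ! j) / real (r ! (length r - 1) mod r ! j)))
       \<and> ((\<exists>j. j + 1 < length r \<and> \<not> (r ! j) dvd (r ! (length r - 1))) \<longrightarrow>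
           finite {x::nat list. length x = length r \<and> (\<forall>k<length x. x ! k \<ge> 1)
                     \<and> reflexive_poly (length (rep_vec r x)) (Delta (rep_vec r x))
                     \<and> IDP (length (rep_vec r x)) (Delta (rep_vec r x))})"
  unfolding reflexive_IDP_multiplicity_def[symmetric]
proof (intro conjI allI impI)
  fix x i assume x: "reflexive_IDP_multiplicity r x" and i: "i + 1 < length r"
  show "real (x ! i) \<le> real (r ! (i + 1)) / real (r ! i)"
    using reflexive_IDP_multiplicity_bound_succ[OF x r_pos r_sorted i] r_pos[rule_format, of i] i
    by (intro nat_mult_less_imp_le_divide) auto
next
  fix x j assume x: "reflexive_IDP_multiplicity r x"
    and j: "j + 1 < length r \<and> \<not> r ! j dvd r ! (length r - 1)"
  show "real (x ! (length r - 1)) \<le> real (r ! j) / real (r ! (length r - 1) mod r ! j)"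
    using reflexive_IDP_multiplicity_bound_last[OF x r_pos] j
    by (intro nat_mult_less_imp_le_divide) (auto simp: mod_greater_zero_iff_not_dvd)
next
  assume "\<exists>j. j + 1 < length r \<and> \<not> r ! j dvd r ! (length r - 1)"
  then obtain j where j: "j + 1 < length r" "\<not> r ! j dvd r ! (length r - 1)" by blast
  show "finite {x. reflexive_IDP_multiplicity r x}"
    by (rule finite_reflexive_IDP_multiplicities[OF r_pos r_sorted _ j(2)]) (use j(1) in simp)
qed

end
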